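(* Let $k\ge1$, $\tau\in(0,1)$, $f(s)=s-\frac{s}{\tau}+\frac{\mathbb{E}[\min\{\mathrm{Pois}(sk),k\}]}{\tau k}$, $\alpha_k^\tau=\sup_{0\le s\le1}f(s)$, $\beta_k^\tau=\sup_{s\ge0}f(s)$, and let $s^*_\alpha,s^*_\beta$ be the respective maximizers. Then $s^*_\alpha=s^*_\beta$ (and hence $\alpha_k^\tau=\beta_k^\tau$) if and only if $$\tau\le1-e^{-k}\sum_{j=0}^{k-1}\frac{k^j}{j!}.$$ In particular, this condition holds for every $k\ge1$ whenever $\tau\le1/2$.
   Context: $\mathrm{Pois}(\lambda)$ denotes a Poisson random variable with mean $\lambda$. The function $f$ is concave on $[0,\infty)$, so the maximizers are well defined. *)

theory Defs
  imports "HOL-Analysis.Analysis"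
begin

text \<open>E[min(Pois(lam), k)] written out via the Poisson pmf
  P(Pois(lam) = j) = lam^j / j! * exp(-lam)  (for lam = 0 this is the point mass at 0).\<close>
definition pois_min_mean :: "real \<Rightarrow> nat \<Rightarrow> real" where
  "pois_min_mean lam k = (\<Sum>j. real (min j k) * (lam ^ j / fact j * exp (- lam)))"

definition fobj :: "nat \<Rightarrow> real \<Rightarrow> real \<Rightarrow> real" where
  "fobj k \<tau> s = s - s / \<tau> + pois_min_mean (s * real k) k / (\<tau> * real k)"

definition alpha_val :: "nat \<Rightarrow> real \<Rightarrow> real" where
  "alpha_val k \<tau> = (SUP s\<in>{0..1}. fobj k \<tau> s)"

definition beta_val :: "nat \<Rightarrow> real \<Rightarrow> real" where
  "beta_val k \<tau> = (SUP s\<in>{0..}. fobj k \<tau> s)"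

definition s_alpha :: "nat \<Rightarrow> real \<Rightarrow> real" where
  "s_alpha k \<tau> = (THE s. s \<in> {0..1} \<and> (\<forall>t\<in>{0..1}. fobj k \<tau> t \<le> fobj k \<tau> s))"

definition s_beta :: "nat \<Rightarrow> real \<Rightarrow> real" where
  "s_beta k \<tau> = (THE s. s \<in> {0..} \<and> (\<forall>t\<in>{0..}. fobj k \<tau> t \<le> fobj k \<tau> s))"

end

theory Submission
  imports Defs
begin

text \<open>Writing \<open>P\<^sub>k(x) = \<bbbP>(Pois(x) < k)\<close>, the objective has derivative
  \<open>f'(s) = (P\<^sub>k(s k) - (1 - \<tau>)) / \<tau>\<close>. Since \<open>P\<^sub>k\<close> decreases strictly from 1 to 0,
  \<open>f\<close> is unimodal on \<open>[0, \<infinity>)\<close> with peak at the unique \<open>s\<^sup>*\<close> solving \<open>P\<^sub>k(s\<^sup>* k) = 1 - \<tau>\<close>;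
  hence \<open>s\<^sub>\<beta> = s\<^sup>*\<close> and \<open>s\<^sub>\<alpha> = min s\<^sup>* 1\<close>, and they agree iff \<open>P\<^sub>k(k) \<le> 1 - \<tau>\<close>.
  For the last claim, \<open>P\<^sub>k(k) \<le> 1/2\<close> (the mean \<open>k\<close> is a median of \<open>Pois(k)\<close>) follows because
  \<open>a \<mapsto> P\<^sub>k(k\<^sup>2/a) + P\<^sub>k(a)\<close> is nondecreasing on \<open>[k, \<infinity>)\<close> with limit \<open>P\<^sub>k(0) + 0 = 1\<close>.\<close>

definition exp_trunc :: "nat \<Rightarrow> real \<Rightarrow> real" where
  "exp_trunc k x = (\<Sum>j<k. x ^ j / fact j)"

definition pois_lt :: "nat \<Rightarrow> real \<Rightarrow> real" where
  "pois_lt k x = exp (- x) * exp_trunc k x"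

text \<open>\<open>exp (-x) * shortfall_poly k x = \<bbbE>[max (k - Pois(x)) 0]\<close>.\<close>
definition shortfall_poly :: "nat \<Rightarrow> real \<Rightarrow> real" where
  "shortfall_poly k x = (\<Sum>j<k. (real k - real j) * x ^ j / fact j)"

lemma pois_min_mean_eq: "pois_min_mean x k = real k - exp (- x) * shortfall_poly k x"
proof -
  define p where "p j = x ^ j / fact j * exp (- x)" for j
  have "(\<lambda>j. x ^ j / fact j) sums exp x"
    using exp_converges[of x] by (simp add: divide_inverse_commute scaleR_conv_of_real)
  then have total: "(\<lambda>j. real k * p j) sums (real k * (exp x * exp (- x)))"
    unfolding p_def by (intro sums_mult sums_mult2)
  have short: "(\<lambda>j. if j \<in> {..<k} then (real k - real j) * p j else 0)
      sums (\<Sum>j<k. (real k - real j) * p j)"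
    by (rule sums_If_finite_set) simp
  have "(\<lambda>j. real (min j k) * p j)
      = (\<lambda>j. real k * p j - (if j \<in> {..<k} then (real k - real j) * p j else 0))"
    by (auto simp: algebra_simps min_def)
  then have "(\<lambda>j. real (min j k) * p j) sums (real k - (\<Sum>j<k. (real k - real j) * p j))"
    using sums_diff[OF total short] by (simp add: exp_minus)
  then have "pois_min_mean x k = real k - (\<Sum>j<k. (real k - real j) * p j)"
    unfolding pois_min_mean_def p_def by (rule sums_unique[symmetric])
  then show ?thesis
    by (simp add: p_def shortfall_poly_def sum_distrib_left sum_distrib_right mult_ac)
qed

lemma exp_trunc_has_derivative: "(exp_trunc k has_real_derivative exp_trunc (k - 1) x) (at x)"
proof (cases k)
  case 0
  then show ?thesis by (simp add: exp_trunc_def[abs_def])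
next
  case (Suc m)
  have "(exp_trunc k has_real_derivative (\<Sum>j<Suc m. real j * x ^ (j - 1) / fact j)) (at x)"
    unfolding exp_trunc_def[abs_def] Suc by (auto intro!: derivative_eq_intros)
  moreover have "(\<Sum>j<Suc m. real j * x ^ (j - 1) / fact j) = exp_trunc m x"
    by (subst sum.lessThan_Suc_shift) (auto intro!: sum.cong simp: exp_trunc_def divide_simps)
  ultimately show ?thesis using Suc by simp
qed

lemma shortfall_poly_has_derivative:
  "(shortfall_poly k has_real_derivative shortfall_poly k x - exp_trunc k x) (at x)"
proof (cases k)
  case 0
  then show ?thesis by (simp add: shortfall_poly_def[abs_def] exp_trunc_def)
next
  case (Suc m)
  have "(shortfall_poly k has_real_derivative
      (\<Sum>j<Suc m. (real (Suc m) - real j) * (real j * x ^ (j - 1)) / fact j)) (at x)"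
    unfolding shortfall_poly_def[abs_def] Suc
    by (auto intro!: derivative_eq_intros sum.cong simp: divide_simps algebra_simps)
  moreover have "(\<Sum>j<Suc m. (real (Suc m) - real j) * (real j * x ^ (j - 1)) / fact j)
      = (\<Sum>j<Suc m. (real m - real j) * x ^ j / fact j)"
    by (subst sum.lessThan_Suc_shift) (auto intro!: sum.cong simp: divide_simps)
  moreover have "\<dots> = shortfall_poly k x - exp_trunc k x"
    unfolding Suc shortfall_poly_def exp_trunc_def sum_subtractf[symmetric]
    by (rule sum.cong) (auto simp: field_simps)
  ultimately show ?thesis by simp
qed

lemma pois_lt_has_derivative:
  assumes "k \<ge> 1"
  shows "(pois_lt k has_real_derivative - (exp (- x) * x ^ (k - 1) / fact (k - 1))) (at x)"
proof -
  have "(pois_lt k has_real_derivative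
      exp (- x) * (- 1) * exp_trunc k x + exp (- x) * exp_trunc (k - 1) x) (at x)"
    unfolding pois_lt_def[abs_def]
    by (auto intro!: derivative_eq_intros exp_trunc_has_derivative)
  moreover obtain m where "k = Suc m" using assms by (cases k) auto
  then have "exp (- x) * (- 1) * exp_trunc k x + exp (- x) * exp_trunc (k - 1) x
      = - (exp (- x) * x ^ (k - 1) / fact (k - 1))"
    by (simp add: exp_trunc_def algebra_simps)
  ultimately show ?thesis by simp
qed

lemma isCont_pois_lt: "k \<ge> 1 \<Longrightarrow> isCont (pois_lt k) x"
  using pois_lt_has_derivative DERIV_isCont by blast

lemma pois_lt_0 [simp]: "k \<ge> 1 \<Longrightarrow> pois_lt k 0 = 1"
  by (cases k) (simp_all add: pois_lt_def exp_trunc_def sum.lessThan_Suc_shift del: sum.lessThan_Suc)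

lemma pois_lt_tendsto_0: "(pois_lt k \<longlongrightarrow> 0) at_top"
proof -
  have "((\<lambda>x::real. \<Sum>j<k. x ^ j / exp x / fact j) \<longlongrightarrow> (\<Sum>j<k. 0 / fact j)) at_top"
    using tendsto_divide_zero[OF tendsto_power_div_exp_0] by (intro tendsto_sum) simp
  moreover have "(\<lambda>x. \<Sum>j<k. x ^ j / exp x / fact j) = pois_lt k"
    by (rule ext) (simp add: pois_lt_def exp_trunc_def sum_distrib_left exp_minus field_simps)
  ultimately show ?thesis by simp
qed

lemma pois_lt_strict_antimono:
  assumes "k \<ge> 1" "0 \<le> x" "x < y"
  shows "pois_lt k y < pois_lt k x"
proof (rule DERIV_neg_imp_decreasing_open[OF \<open>x < y\<close>])
  fix t assume "x < t" "t < y"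
  then show "\<exists>D. DERIV (pois_lt k) t :> D \<and> D < 0"
    using assms pois_lt_has_derivative[OF \<open>k \<ge> 1\<close>, of t] by auto
next
  show "continuous_on {x..y} (pois_lt k)"
    using isCont_pois_lt[OF \<open>k \<ge> 1\<close>] by (simp add: continuous_at_imp_continuous_on)
qed

lemma pois_lt_le_iff:
  assumes "k \<ge> 1" "0 \<le> x" "0 \<le> y"
  shows "pois_lt k y \<le> pois_lt k x \<longleftrightarrow> x \<le> y"
  using pois_lt_strict_antimono[OF \<open>k \<ge> 1\<close>, of x y] pois_lt_strict_antimono[OF \<open>k \<ge> 1\<close>, of y x] assms
  by (cases x y rule: linorder_cases) auto

lemma pois_lt_level:
  assumes "k \<ge> 1" "0 < c" "c < 1"
  obtains x where "0 < x" "pois_lt k x = c"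
proof -
  obtain N where N: "\<And>x. x \<ge> N \<Longrightarrow> pois_lt k x < c"
    using order_tendstoD(2)[OF pois_lt_tendsto_0 \<open>0 < c\<close>] by (auto simp: eventually_at_top_linorder)
  have "\<exists>x. 0 \<le> x \<and> x \<le> max N 0 \<and> pois_lt k x = c"
    using assms N[of "max N 0"] isCont_pois_lt[OF \<open>k \<ge> 1\<close>]
    by (intro IVT2) auto
  then obtain x where "0 \<le> x" "pois_lt k x = c" by blast
  moreover have "x \<noteq> 0" using \<open>pois_lt k x = c\<close> assms by auto
  ultimately show thesis using that[of x] by simp
qed

lemma two_ln_le_minus_inverse: "(x::real) \<ge> 1 \<Longrightarrow> 2 * ln x \<le> x - 1 / x"
proof -
  assume "x \<ge> 1"
  have "(\<lambda>t. t - 1 / t - 2 * ln t) 1 \<le> (\<lambda>t. t - 1 / t - 2 * ln t) x"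
  proof (rule DERIV_nonneg_imp_nondecreasing[OF \<open>x \<ge> 1\<close>])
    fix t :: real assume "1 \<le> t"
    then have "((\<lambda>t. t - 1 / t - 2 * ln t) has_real_derivative (t - 1)\<^sup>2 / t\<^sup>2) (at t)"
      by (auto intro!: derivative_eq_intros simp: power2_eq_square field_simps)
    then show "\<exists>y. ((\<lambda>t. t - 1 / t - 2 * ln t) has_real_derivative y) (at t) \<and> 0 \<le> y"
      by auto
  qed
  then show ?thesis by simp
qed

lemma exp_neg_power_le_reflection:
  fixes n :: nat and a :: real
  assumes "n \<ge> 1" "real n \<le> a"
  shows "exp (- a) * a ^ n \<le> exp (- (real n)\<^sup>2 / a) * ((real n)\<^sup>2 / a) ^ n"
proof -
  define K where "K = real n"
  define x where "x = a / K"
  have "K > 0" "a > 0" "x \<ge> 1" using assms by (auto simp: K_def x_def)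
  have "x\<^sup>2 = exp (2 * ln x)"
    using \<open>x \<ge> 1\<close> by (simp add: exp_ln ln_powr[symmetric] power2_eq_square exp_add[symmetric] mult_2)
  also have "\<dots> \<le> exp (x - 1 / x)" using two_ln_le_minus_inverse[OF \<open>x \<ge> 1\<close>] by simp
  finally have "(x\<^sup>2) ^ n \<le> exp (x - 1 / x) ^ n" by (intro power_mono) auto
  also have "\<dots> = exp (a - K\<^sup>2 / a)"
    using \<open>K > 0\<close> \<open>a > 0\<close>
    by (simp add: exp_of_nat_mult[symmetric] K_def x_def field_simps power2_eq_square)
  finally have "a ^ n / (K\<^sup>2 / a) ^ n \<le> exp (a - K\<^sup>2 / a)"
    using \<open>K > 0\<close> \<open>a > 0\<close> by (simp add: x_def power_divide[symmetric] field_simps power2_eq_square)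
  then have "a ^ n \<le> exp (a - K\<^sup>2 / a) * (K\<^sup>2 / a) ^ n"
    using \<open>K > 0\<close> \<open>a > 0\<close> by (simp add: divide_le_eq)
  then have "exp (- a) * a ^ n \<le> exp (- a) * (exp (a - K\<^sup>2 / a) * (K\<^sup>2 / a) ^ n)"
    by (intro mult_left_mono) auto
  then show ?thesis
    by (simp add: K_def exp_add[symmetric] mult.assoc[symmetric])
qed

lemma pois_lt_self_le_half:
  assumes "k \<ge> 1"
  shows "pois_lt k (real k) \<le> 1 / 2"
proof -
  define K where "K = real k"
  have "K > 0" using assms by (simp add: K_def)
  define W where "W a = pois_lt k (K\<^sup>2 / a) + pois_lt k a" for a
  have W_mono: "W K \<le> W a" if "a \<ge> K" for a
  proof (rule DERIV_nonneg_imp_nondecreasing[OF that])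
    fix b assume "K \<le> b"
    then have "b > 0" using \<open>K > 0\<close> by simp
    have "((\<lambda>b. K\<^sup>2 / b) has_real_derivative - (K\<^sup>2 / b\<^sup>2)) (at b)"
      using \<open>b > 0\<close> by (auto intro!: derivative_eq_intros simp: power2_eq_square field_simps)
    from DERIV_add[OF DERIV_chain2[OF pois_lt_has_derivative[OF assms] this]
        pois_lt_has_derivative[OF assms]]
    have "(W has_real_derivative
        (exp (- (K\<^sup>2 / b)) * (K\<^sup>2 / b) ^ k - exp (- b) * b ^ k) / (b * fact (k - 1))) (at b)"
      using \<open>b > 0\<close> \<open>k \<ge> 1\<close>
      by (cases k) (simp_all add: W_def[abs_def] field_simps power2_eq_square)
    moreover have "exp (- b) * b ^ k \<le> exp (- (K\<^sup>2 / b)) * (K\<^sup>2 / b) ^ k"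
      using exp_neg_power_le_reflection[OF assms, of b] \<open>K \<le> b\<close> by (simp add: K_def)
    ultimately show "\<exists>y. (W has_real_derivative y) (at b) \<and> 0 \<le> y"
      using \<open>b > 0\<close> by auto
  qed
  have "((\<lambda>a. K\<^sup>2 / a) \<longlongrightarrow> 0) at_top"
    by (intro tendsto_divide_0[OF tendsto_const] filterlim_at_top_imp_at_infinity filterlim_ident)
  then have "((\<lambda>a. pois_lt k (K\<^sup>2 / a)) \<longlongrightarrow> pois_lt k 0) at_top"
    by (rule isCont_tendsto_compose[OF isCont_pois_lt[OF assms]])
  then have "(W \<longlongrightarrow> 1 + 0) at_top"
    unfolding W_def[abs_def] using assms by (intro tendsto_add pois_lt_tendsto_0) auto
  then have "W K \<le> 1"
    using W_mono by (intro tendsto_lowerbound) (auto simp: eventually_at_top_linorder intro!: exI[of _ K])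
  moreover have "W K = 2 * pois_lt k K"
    using \<open>K > 0\<close> by (simp add: W_def power2_eq_square)
  ultimately show ?thesis by (simp add: K_def)
qed

lemma fobj_has_derivative:
  assumes "k \<ge> 1" "\<tau> > 0"
  shows "(fobj k \<tau> has_real_derivative (pois_lt k (s * real k) - (1 - \<tau>)) / \<tau>) (at s)"
proof -
  have fobj_eq: "fobj k \<tau> = (\<lambda>s. s - s / \<tau>
      + (real k - exp (- (s * real k)) * shortfall_poly k (s * real k)) / (\<tau> * real k))"
    by (simp add: fobj_def[abs_def] pois_min_mean_eq)
  have "\<tau> \<noteq> 0" "real k \<noteq> 0" using assms by auto
  then show ?thesis
    unfolding fobj_eq
    by (auto intro!: derivative_eq_intros DERIV_chain2[OF shortfall_poly_has_derivative]
        simp: pois_lt_def field_simps)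
qed

lemma deriv_sign_change_strict_max:
  fixes f f' :: "real \<Rightarrow> real"
  assumes deriv: "\<And>x. (f has_real_derivative f' x) (at x)"
    and pos: "\<And>x. 0 \<le> x \<Longrightarrow> x < s \<Longrightarrow> 0 < f' x"
    and neg: "\<And>x. s < x \<Longrightarrow> f' x < 0"
    and "0 \<le> x"
  shows "x \<noteq> s \<Longrightarrow> f x < f s"
    and "x \<le> c \<Longrightarrow> x \<noteq> min s c \<Longrightarrow> f x < f (min s c)"
proof -
  have cont: "continuous_on A f" for A
    using deriv DERIV_isCont continuous_at_imp_continuous_on by blast
  have inc: "f a < f b" if "0 \<le> a" "a < b" "b \<le> s" for a b
    using that by (intro DERIV_pos_imp_increasing_open[OF \<open>a < b\<close> _ cont]) (use deriv pos in force)
  have dec: "f b < f a" if "s \<le> a" "a < b" for a b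
    using that by (intro DERIV_neg_imp_decreasing_open[OF \<open>a < b\<close> _ cont]) (use deriv neg in force)
  show "x \<noteq> s \<Longrightarrow> f x < f s"
    using inc[of x s] dec[of s x] \<open>0 \<le> x\<close> by (cases "x < s") auto
  show "x \<le> c \<Longrightarrow> x \<noteq> min s c \<Longrightarrow> f x < f (min s c)"
    using inc[of x s] inc[of x c] dec[of s x] \<open>0 \<le> x\<close> by (cases "x < s") (auto simp: min_def)
qed

lemma fobj_strict_max:
  assumes "k \<ge> 1" "\<tau> > 0" "0 < s" "pois_lt k (s * real k) = 1 - \<tau>" "0 \<le> x"
  shows "x \<noteq> s \<Longrightarrow> fobj k \<tau> x < fobj k \<tau> s"
    and "x \<le> c \<Longrightarrow> x \<noteq> min s c \<Longrightarrow> fobj k \<tau> x < fobj k \<tau> (min s c)"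
proof -
  have "real k > 0" using assms by simp
  have pos: "0 < (pois_lt k (x * real k) - (1 - \<tau>)) / \<tau>" if "0 \<le> x" "x < s" for x
    using pois_lt_strict_antimono[OF \<open>k \<ge> 1\<close>, of "x * real k" "s * real k"] that assms \<open>real k > 0\<close>
    by simp
  have neg: "(pois_lt k (x * real k) - (1 - \<tau>)) / \<tau> < 0" if "s < x" for x
    using pois_lt_strict_antimono[OF \<open>k \<ge> 1\<close>, of "s * real k" "x * real k"] that assms \<open>real k > 0\<close>
    by (simp add: divide_neg_pos)
  note max = deriv_sign_change_strict_max[OF fobj_has_derivative[OF \<open>k \<ge> 1\<close> \<open>\<tau> > 0\<close>] pos neg]
  show "x \<noteq> s \<Longrightarrow> fobj k \<tau> x < fobj k \<tau> s"
    and "x \<le> c \<Longrightarrow> x \<noteq> min s c \<Longrightarrow> fobj k \<tau> x < fobj k \<tau> (min s c)"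
    using max \<open>0 \<le> x\<close> by auto
qed

lemma unique_argmax_eq:
  fixes f :: "'a \<Rightarrow> 'b :: conditionally_complete_linorder"
  assumes "s \<in> A" "\<And>x. x \<in> A \<Longrightarrow> x \<noteq> s \<Longrightarrow> f x < f s"
  shows "(THE s. s \<in> A \<and> (\<forall>t\<in>A. f t \<le> f s)) = s"
    and "(SUP t\<in>A. f t) = f s"
proof -
  have max: "\<forall>t\<in>A. f t \<le> f t'" if "t' = s" for t'
    using assms that by (metis order.order_iff_strict)
  show "(THE s. s \<in> A \<and> (\<forall>t\<in>A. f t \<le> f s)) = s"
    using assms max by (intro the_equality) (auto, meson leD)
  show "(SUP t\<in>A. f t) = f s"
    using assms max by (intro cSup_eq_maximum) auto
qed

theorem proposition6p2:
  fixes k :: nat and \<tau> :: real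
  assumes "k \<ge> 1" and "0 < \<tau>" and "\<tau> < 1"
  shows "(s_alpha k \<tau> = s_beta k \<tau> \<longleftrightarrow>
            \<tau> \<le> 1 - exp (- real k) * (\<Sum>j<k. real k ^ j / fact j))
         \<and> (s_alpha k \<tau> = s_beta k \<tau> \<longrightarrow> alpha_val k \<tau> = beta_val k \<tau>)
         \<and> (\<tau> \<le> 1/2 \<longrightarrow> \<tau> \<le> 1 - exp (- real k) * (\<Sum>j<k. real k ^ j / fact j))"
proof -
  obtain x where "0 < x" and level: "pois_lt k x = 1 - \<tau>"
    using pois_lt_level[OF \<open>k \<ge> 1\<close>, of "1 - \<tau>"] assms by auto
  define s where "s = x / real k"
  have "0 < s" "pois_lt k (s * real k) = 1 - \<tau>"
    using \<open>0 < x\<close> level \<open>k \<ge> 1\<close> by (auto simp: s_def)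
  note max = fobj_strict_max[OF \<open>k \<ge> 1\<close> \<open>0 < \<tau>\<close> this]
  have beta: "s_beta k \<tau> = s" "beta_val k \<tau> = fobj k \<tau> s"
    using unique_argmax_eq[of s "{0..}" "fobj k \<tau>"] max(1) \<open>0 < s\<close>
    by (auto simp: s_beta_def beta_val_def)
  have alpha: "s_alpha k \<tau> = min s 1" "alpha_val k \<tau> = fobj k \<tau> (min s 1)"
    using unique_argmax_eq[of "min s 1" "{0..1}" "fobj k \<tau>"] max(2)[of _ 1] \<open>0 < s\<close>
    by (auto simp: s_alpha_def alpha_val_def)
  have "s \<le> 1 \<longleftrightarrow> \<tau> \<le> 1 - pois_lt k (real k)"
    using pois_lt_le_iff[OF \<open>k \<ge> 1\<close>, of "s * real k" "real k"] \<open>0 < s\<close> \<open>k \<ge> 1\<close>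
      \<open>pois_lt k (s * real k) = 1 - \<tau>\<close> by auto
  moreover have "pois_lt k (real k) = exp (- real k) * (\<Sum>j<k. real k ^ j / fact j)"
    by (simp add: pois_lt_def exp_trunc_def)
  ultimately show ?thesis
    using alpha beta pois_lt_self_le_half[OF \<open>k \<ge> 1\<close>] by (auto simp: min_def)
qed

end
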